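(* Let $\Lambda\subset\mathbb{R}^d$ be the closure of an open connected set with piecewise smooth boundary, let $F:\mathbb{R}^d\to\mathbb{R}^d$ and $v:\Lambda\to\mathbb{R}^d$ be such that for each $x\in\Lambda$ the problem $$\frac{d^2y(t,x)}{dt^2}=F(y(t,x)),\quad y(0,x)=x,\quad\frac{dy(0,x)}{dt}=v(x)$$ has a unique solution for all $t\in[0,\infty)$. Assume that $(F(y)-F(x),y-x)\ge0$ for all $x,y\in\mathbb{R}^d$ and $(v(x_2)-v(x_1),x_2-x_1)\ge0$ for all $x_1,x_2\in\Lambda$. Then there are no collisions on $[0,\infty)$: $y(t,x_1)\ne y(t,x_2)$ for all $t\ge0$ and all $x_1\ne x_2$ in $\Lambda$.
   Context: $(\cdot,\cdot)$ is the standard Euclidean inner product on $\mathbb{R}^d$. Each point of $\Lambda$ is a non-interacting point particle with initial position $x$ and initial velocity $v(x)$. *)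

theory Defs
  imports "HOL-Analysis.Analysis"
begin

definition is_newton_solution ::
  "('a::euclidean_space \<Rightarrow> 'a) \<Rightarrow> 'a \<Rightarrow> 'a \<Rightarrow> (real \<Rightarrow> 'a) \<Rightarrow> bool" where
  "is_newton_solution F x0 v0 z \<longleftrightarrow>
     (\<exists>z'. (\<forall>t\<ge>0. (z has_vector_derivative z' t) (at t within {0..})
                  \<and> (z' has_vector_derivative F (z t)) (at t within {0..}))
           \<and> z 0 = x0 \<and> z' 0 = v0)"

end

theory Submission
  imports Defs
begin

text \<open>For the difference w of two trajectories, monotonicity of F makes
  (w \<bullet> w')' = w \<bullet> (F y2 - F y1) + |w'|^2 nonnegative, and monotonicity of v makes
  w \<bullet> w' nonnegative at time 0. Hence w \<bullet> w' \<ge> 0 for all t \<ge> 0, so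
  |w|^2, whose derivative is 2 w \<bullet> w', never decreases: particles never come
  closer than their initial distance.\<close>

lemma nonneg_deriv_imp_ge_initial:
  fixes g g' :: "real \<Rightarrow> real"
  assumes deriv: "\<And>s. s \<ge> 0 \<Longrightarrow> (g has_real_derivative g' s) (at s within {0..})"
    and nonneg: "\<And>s. s \<ge> 0 \<Longrightarrow> g' s \<ge> 0"
    and "t \<ge> 0"
  shows "g 0 \<le> g t"
proof (rule DERIV_nonneg_imp_increasing_open[OF \<open>t \<ge> 0\<close>])
  fix s :: real assume s: "0 < s" "s < t"
  have "at s within {0..} = at s"
    using s by (intro at_within_interior) simp
  then show "\<exists>d. DERIV g s :> d \<and> d \<ge> 0"
    using deriv[of s] nonneg[of s] s by auto
next
  have "continuous_on {0..} g"
    unfolding continuous_on_eq_continuous_within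
    using deriv by (auto intro: DERIV_continuous)
  then show "continuous_on {0..t} g"
    by (rule continuous_on_subset) auto
qed

lemma norm_ge_initial_if_outward_acceleration:
  fixes w w' a :: "real \<Rightarrow> 'a::real_inner"
  assumes dw: "\<And>s. s \<ge> 0 \<Longrightarrow> (w has_vector_derivative w' s) (at s within {0..})"
    and dw': "\<And>s. s \<ge> 0 \<Longrightarrow> (w' has_vector_derivative a s) (at s within {0..})"
    and outward: "\<And>s. s \<ge> 0 \<Longrightarrow> w s \<bullet> a s \<ge> 0"
    and initial: "w 0 \<bullet> w' 0 \<ge> 0"
    and "t \<ge> 0"
  shows "norm (w 0) \<le> norm (w t)"
proof -
  have radial_speed_nonneg: "w s \<bullet> w' s \<ge> 0" if "s \<ge> 0" for s
  proof -
    have "((\<lambda>r. w r \<bullet> w' r) has_real_derivative w s \<bullet> a s + w' s \<bullet> w' s)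
        (at s within {0..})" if "s \<ge> 0" for s
      unfolding has_real_derivative_iff_has_vector_derivative
      using bounded_bilinear.has_vector_derivative[OF bounded_bilinear_inner dw dw'] that
      by simp
    then have "w 0 \<bullet> w' 0 \<le> w s \<bullet> w' s"
      by (rule nonneg_deriv_imp_ge_initial) (simp_all add: outward \<open>s \<ge> 0\<close>)
    with initial show ?thesis by simp
  qed
  have "((\<lambda>r. w r \<bullet> w r) has_real_derivative w s \<bullet> w' s + w' s \<bullet> w s)
      (at s within {0..})" if "s \<ge> 0" for s
    unfolding has_real_derivative_iff_has_vector_derivative
    using bounded_bilinear.has_vector_derivative[OF bounded_bilinear_inner dw dw] that
    by simp
  then have "w 0 \<bullet> w 0 \<le> w t \<bullet> w t"
    by (rule nonneg_deriv_imp_ge_initial)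
       (simp_all add: radial_speed_nonneg inner_commute \<open>t \<ge> 0\<close>)
  then show ?thesis
    by (simp add: norm_eq_sqrt_inner)
qed

lemma newton_solutions_distance_ge_initial:
  fixes F :: "'a::euclidean_space \<Rightarrow> 'a"
  assumes mono_F: "\<And>x1 x2. (F x2 - F x1) \<bullet> (x2 - x1) \<ge> 0"
    and sol1: "is_newton_solution F x1 v1 z1"
    and sol2: "is_newton_solution F x2 v2 z2"
    and spread: "(v2 - v1) \<bullet> (x2 - x1) \<ge> 0"
    and "t \<ge> 0"
  shows "norm (x2 - x1) \<le> norm (z2 t - z1 t)"
proof -
  obtain p1 where p1: "\<And>s. s \<ge> 0 \<Longrightarrow> (z1 has_vector_derivative p1 s) (at s within {0..})"
      "\<And>s. s \<ge> 0 \<Longrightarrow> (p1 has_vector_derivative F (z1 s)) (at s within {0..})"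
      "z1 0 = x1" "p1 0 = v1"
    using sol1 unfolding is_newton_solution_def by blast
  obtain p2 where p2: "\<And>s. s \<ge> 0 \<Longrightarrow> (z2 has_vector_derivative p2 s) (at s within {0..})"
      "\<And>s. s \<ge> 0 \<Longrightarrow> (p2 has_vector_derivative F (z2 s)) (at s within {0..})"
      "z2 0 = x2" "p2 0 = v2"
    using sol2 unfolding is_newton_solution_def by blast
  have "norm (z2 0 - z1 0) \<le> norm (z2 t - z1 t)"
  proof (rule norm_ge_initial_if_outward_acceleration
      [where w' = "\<lambda>s. p2 s - p1 s" and a = "\<lambda>s. F (z2 s) - F (z1 s)"])
    show "((\<lambda>s. z2 s - z1 s) has_vector_derivative p2 s - p1 s) (at s within {0..})"
      and "((\<lambda>s. p2 s - p1 s) has_vector_derivative F (z2 s) - F (z1 s)) (at s within {0..})"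
      if "s \<ge> 0" for s
      using p1 p2 that by (auto intro!: derivative_intros)
    show "(z2 s - z1 s) \<bullet> (F (z2 s) - F (z1 s)) \<ge> 0" for s
      using mono_F by (simp add: inner_commute)
    show "(z2 0 - z1 0) \<bullet> (p2 0 - p1 0) \<ge> 0"
      using spread p1 p2 by (simp add: inner_commute)
  qed fact
  with p1 p2 show ?thesis by simp
qed

theorem theorem4:
  fixes U :: "'a::euclidean_space set"
    and \<Lambda> :: "'a set"
    and F :: "'a \<Rightarrow> 'a"
    and v :: "'a \<Rightarrow> 'a"
    and y :: "real \<Rightarrow> 'a \<Rightarrow> 'a"
  assumes "open U" and "connected U" and "\<Lambda> = closure U"
    and sol: "\<forall>x\<in>\<Lambda>. is_newton_solution F x (v x) (\<lambda>t. y t x)"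
    and uniq: "\<forall>x\<in>\<Lambda>. \<forall>z. is_newton_solution F x (v x) z \<longrightarrow> (\<forall>t\<ge>0. z t = y t x)"
    and monF: "\<forall>x1 x2. (F x2 - F x1) \<bullet> (x2 - x1) \<ge> 0"
    and monv: "\<forall>x1\<in>\<Lambda>. \<forall>x2\<in>\<Lambda>. (v x2 - v x1) \<bullet> (x2 - x1) \<ge> 0"
  shows "\<forall>t\<ge>0. \<forall>x1\<in>\<Lambda>. \<forall>x2\<in>\<Lambda>. x1 \<noteq> x2 \<longrightarrow> y t x1 \<noteq> y t x2"
proof (intro allI impI ballI)
  fix t :: real and x1 x2
  assume "t \<ge> 0" "x1 \<in> \<Lambda>" "x2 \<in> \<Lambda>" "x1 \<noteq> x2"
  then have "0 < norm (x2 - x1)" by simp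
  also have "\<dots> \<le> norm (y t x2 - y t x1)"
    using newton_solutions_distance_ge_initial monF sol monv \<open>t \<ge> 0\<close> \<open>x1 \<in> \<Lambda>\<close> \<open>x2 \<in> \<Lambda>\<close>
    by blast
  finally show "y t x1 \<noteq> y t x2" by simp
qed

end
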